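(* Consider a firm with managers $i=1,\dots,n$, each with skill $s_i\in(0,1]$, and parameters $A>0$, $\alpha\in(0,1)$, $c_0>0$, $\gamma>0$, $\beta\ge 0$. Fix a worker allocation: manager $i$ supervises a team of $n_i\ge 0$ workers, the workers $j$ having skills $q_j>0$, and let $Q_i=\sum_{j\in\text{team}_i} q_j$; assume at least one team is nonempty. For agent capital $K_A\ge 0$ define $$c_i(K_A)=\frac{c_0}{1+\gamma K_A s_i^{\beta}},\qquad L_{\text{eff},i}(K_A)=\frac{Q_i}{1+c_i(K_A)\,n_i},\qquad Y_i(K_A)=A\,L_{\text{eff},i}(K_A)^{\alpha},\qquad Y(K_A)=\sum_{i=1}^n Y_i(K_A).$$ Then, holding the team allocations $\{n_i,\text{team}_i\}$ fixed, $\partial Y/\partial K_A>0$ for all $K_A\ge 0$, i.e. output is strictly increasing in $K_A$.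
   Context: $K_A$ ("agent capital") is a nonnegative real number representing AI capability that reduces coordination costs; $c_i(K_A)$ is manager $i$'s per-worker coordination cost, $L_{\text{eff},i}$ is the effective labor of team $i$, and $Y_i$ is team $i$'s output (each team has exactly one manager). *)

theory Defs
  imports "HOL-Analysis.Analysis"
begin

definition coord_cost :: "real \<Rightarrow> real \<Rightarrow> real \<Rightarrow> real \<Rightarrow> real \<Rightarrow> real" where
  "coord_cost c0 \<gamma> \<beta> s K = c0 / (1 + \<gamma> * K * s powr \<beta>)"

definition eff_labor :: "real \<Rightarrow> nat \<Rightarrow> real \<Rightarrow> real" where
  "eff_labor Q ni c = Q / (1 + c * real ni)"

definition firm_output ::
  "nat \<Rightarrow> real \<Rightarrow> real \<Rightarrow> real \<Rightarrow> real \<Rightarrow> real \<Rightarrow> (nat \<Rightarrow> real)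
   \<Rightarrow> (nat \<Rightarrow> 'w set) \<Rightarrow> ('w \<Rightarrow> real) \<Rightarrow> real \<Rightarrow> real" where
  "firm_output n A \<alpha> c0 \<gamma> \<beta> s team q K =
     (\<Sum>i<n. A * (eff_labor (\<Sum>j\<in>team i. q j) (card (team i))
                             (coord_cost c0 \<gamma> \<beta> (s i) K)) powr \<alpha>)"

end

theory Submission
  imports Defs
begin

text \<open>Agent capital lowers every manager's coordination cost, a lower coordination cost raises the
  effective labour of every team, and output is increasing in effective labour.\<close>

definition team_output :: "real \<Rightarrow> real \<Rightarrow> real \<Rightarrow> real \<Rightarrow> real \<Rightarrow> real \<Rightarrow> real \<Rightarrow> nat \<Rightarrow> real \<Rightarrow> real"
  where "team_output A \<alpha> c0 \<gamma> \<beta> s Q m K = A * eff_labor Q m (coord_cost c0 \<gamma> \<beta> s K) powr \<alpha>"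

lemma firm_output_eq_sum_team_output:
  "firm_output n A \<alpha> c0 \<gamma> \<beta> s team q =
     (\<lambda>K. \<Sum>i<n. team_output A \<alpha> c0 \<gamma> \<beta> (s i) (\<Sum>j\<in>team i. q j) (card (team i)) K)"
  by (simp add: firm_output_def team_output_def fun_eq_iff)

lemma team_output_no_workers: "team_output A \<alpha> c0 \<gamma> \<beta> s 0 m = (\<lambda>K. 0)"
  by (simp add: team_output_def eff_labor_def fun_eq_iff)

lemma coord_cost_pos:
  assumes "c0 > 0" "\<gamma> \<ge> 0" "K \<ge> 0"
  shows "coord_cost c0 \<gamma> \<beta> s K > 0"
  using assms by (simp add: coord_cost_def add_pos_nonneg)

lemma eff_labor_pos:
  assumes "Q > 0" "c \<ge> 0"
  shows "eff_labor Q m c > 0"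
  using assms by (simp add: eff_labor_def add_pos_nonneg)

lemma coord_cost_has_real_derivative:
  assumes "1 + \<gamma> * K * s powr \<beta> \<noteq> 0"
  shows "(coord_cost c0 \<gamma> \<beta> s has_real_derivative
           - (c0 * \<gamma> * s powr \<beta>) / (1 + \<gamma> * K * s powr \<beta>)\<^sup>2) (at K)"
  unfolding coord_cost_def
  by (rule derivative_eq_intros refl | use assms in \<open>simp add: power2_eq_square\<close>)+

lemma eff_labor_has_real_derivative:
  assumes "1 + c * real m \<noteq> 0"
  shows "(eff_labor Q m has_real_derivative - (Q * real m) / (1 + c * real m)\<^sup>2) (at c)"
  unfolding eff_labor_def
  by (rule derivative_eq_intros refl | use assms in \<open>simp add: power2_eq_square\<close>)+

lemma team_output_has_pos_derivative:
  assumes "A > 0" "\<alpha> > 0" "c0 > 0" "\<gamma> > 0" "s > 0" "Q > 0" "m > 0" "K \<ge> 0"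
  shows "\<exists>D>0. (team_output A \<alpha> c0 \<gamma> \<beta> s Q m has_real_derivative D) (at K)"
proof -
  define c where "c = coord_cost c0 \<gamma> \<beta> s K"
  define L where "L = eff_labor Q m c"
  define dc where "dc = - (c0 * \<gamma> * s powr \<beta>) / (1 + \<gamma> * K * s powr \<beta>)\<^sup>2"
  define dL where "dL = - (Q * real m) / (1 + c * real m)\<^sup>2"
  have "1 + \<gamma> * K * s powr \<beta> > 0"
    using assms by (simp add: add_pos_nonneg)
  then have "dc < 0"
    using assms by (simp add: dc_def)
  have "c > 0"
    using assms by (simp add: c_def coord_cost_pos)
  then have "1 + c * real m > 0"
    by (simp add: add_pos_nonneg)
  then have "dL < 0"
    using assms by (simp add: dL_def)
  have "L > 0"
    using assms \<open>c > 0\<close> by (simp add: L_def eff_labor_pos)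
  have "(coord_cost c0 \<gamma> \<beta> s has_real_derivative dc) (at K)"
    unfolding dc_def using \<open>1 + \<gamma> * K * s powr \<beta> > 0\<close> by (intro coord_cost_has_real_derivative) simp
  moreover have "(eff_labor Q m has_real_derivative dL) (at c)"
    unfolding dL_def using \<open>1 + c * real m > 0\<close> by (intro eff_labor_has_real_derivative) simp
  ultimately have chain: "((\<lambda>K. eff_labor Q m (coord_cost c0 \<gamma> \<beta> s K)) has_real_derivative dL * dc) (at K)"
    unfolding c_def by (rule DERIV_chain2[rotated])
  have "(team_output A \<alpha> c0 \<gamma> \<beta> s Q m has_real_derivative
               A * (\<alpha> * L powr (\<alpha> - 1) * (dL * dc))) (at K)"
    unfolding team_output_def using DERIV_fun_powr[OF chain, of \<alpha>] \<open>L > 0\<close>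
    by (intro DERIV_cmult) (simp add: L_def c_def)
  moreover have "A * (\<alpha> * L powr (\<alpha> - 1) * (dL * dc)) > 0"
    using assms \<open>L > 0\<close> \<open>dL < 0\<close> \<open>dc < 0\<close> by (simp add: mult_neg_neg)
  ultimately show ?thesis
    by blast
qed

lemma has_real_derivative_sum_pos:
  assumes "finite I" "i0 \<in> I" "D0 > 0" "(f i0 has_real_derivative D0) (at x)"
    and "\<And>i. i \<in> I \<Longrightarrow> \<exists>D\<ge>0. (f i has_real_derivative D) (at x)"
  shows "\<exists>D>0. ((\<lambda>x. \<Sum>i\<in>I. f i x) has_real_derivative D) (at x)"
proof -
  obtain Df where Df: "\<And>i. i \<in> I \<Longrightarrow> Df i \<ge> 0 \<and> (f i has_real_derivative Df i) (at x)"
    using assms(5) by metis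
  define Df' where "Df' = Df(i0 := D0)"
  have "Df' i0 \<le> (\<Sum>i\<in>I. Df' i)"
    using assms Df by (intro member_le_sum) (auto simp: Df'_def)
  then have "(\<Sum>i\<in>I. Df' i) > 0"
    using assms by (simp add: Df'_def)
  moreover have "((\<lambda>x. \<Sum>i\<in>I. f i x) has_real_derivative (\<Sum>i\<in>I. Df' i)) (at x)"
    using assms Df by (intro DERIV_sum) (auto simp: Df'_def)
  ultimately show ?thesis
    by blast
qed

lemma strict_mono_on_if_pos_derivative:
  fixes f :: "real \<Rightarrow> real"
  assumes "is_interval S" "\<And>x. x \<in> S \<Longrightarrow> \<exists>D>0. (f has_real_derivative D) (at x)"
  shows "strict_mono_on S f"
proof (rule strict_mono_onI)
  fix x y assume "x \<in> S" "y \<in> S" "x < y"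
  then have between: "z \<in> S" if "x \<le> z" "z \<le> y" for z
    using is_interval_1[THEN iffD1, OF assms(1)] that by blast
  show "f x < f y"
  proof (rule DERIV_pos_imp_increasing[OF \<open>x < y\<close>])
    fix z assume "x \<le> z" "z \<le> y"
    then show "\<exists>D. (f has_real_derivative D) (at z) \<and> D > 0"
      using assms(2)[OF between] by blast
  qed
qed

lemma firm_output_has_pos_derivative:
  fixes s :: "nat \<Rightarrow> real" and team :: "nat \<Rightarrow> 'w set" and q :: "'w \<Rightarrow> real"
  assumes "\<forall>i<n. 0 < s i" "A > 0" "\<alpha> > 0" "c0 > 0" "\<gamma> > 0"
    and "\<forall>i<n. finite (team i)" "\<forall>i<n. \<forall>j\<in>team i. q j > 0" "\<exists>i<n. team i \<noteq> {}"
    and "K \<ge> 0"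
  shows "\<exists>D>0. (firm_output n A \<alpha> c0 \<gamma> \<beta> s team q has_real_derivative D) (at K)"
proof -
  let ?Y = "\<lambda>i. team_output A \<alpha> c0 \<gamma> \<beta> (s i) (\<Sum>j\<in>team i. q j) (card (team i))"
  have nonempty: "\<exists>D>0. (?Y i has_real_derivative D) (at K)" if "i < n" "team i \<noteq> {}" for i
    using assms that
    by (intro team_output_has_pos_derivative) (auto intro!: sum_pos simp: card_gt_0_iff)
  have "\<exists>D\<ge>0. (?Y i has_real_derivative D) (at K)" if "i < n" for i
  proof (cases "team i = {}")
    case True
    then show ?thesis
      using DERIV_const[of 0 "at K"] by (auto simp: team_output_no_workers)
  next
    case False
    then show ?thesis
      using nonempty that less_imp_le by blast
  qed
  moreover obtain i0 D0 where "i0 < n" "D0 > 0" "(?Y i0 has_real_derivative D0) (at K)"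
    using assms(8) nonempty by blast
  ultimately show ?thesis
    unfolding firm_output_eq_sum_team_output
    by (intro has_real_derivative_sum_pos[of "{..<n}" i0 D0]) auto
qed

theorem proposition1:
  fixes n :: nat and A \<alpha> c0 \<gamma> \<beta> :: real
    and s :: "nat \<Rightarrow> real" and team :: "nat \<Rightarrow> 'w set" and q :: "'w \<Rightarrow> real"
  assumes "\<forall>i<n. 0 < s i \<and> s i \<le> 1"
    and "A > 0" and "0 < \<alpha>" and "\<alpha> < 1" and "c0 > 0" and "\<gamma> > 0" and "\<beta> \<ge> 0"
    and "\<forall>i<n. finite (team i)"
    and "\<forall>i<n. \<forall>k<n. i \<noteq> k \<longrightarrow> team i \<inter> team k = {}"
    and "\<forall>i<n. \<forall>j\<in>team i. q j > 0"
    and "\<exists>i<n. team i \<noteq> {}"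
  shows "(\<forall>K\<ge>0. \<exists>D>0. (firm_output n A \<alpha> c0 \<gamma> \<beta> s team q has_real_derivative D)
                           (at K within {0..}))
         \<and> strict_mono_on {0..} (firm_output n A \<alpha> c0 \<gamma> \<beta> s team q)"
proof -
  have "\<exists>D>0. (firm_output n A \<alpha> c0 \<gamma> \<beta> s team q has_real_derivative D) (at K)"
    if "K \<ge> 0" for K
    using assms that by (intro firm_output_has_pos_derivative) auto
  then show ?thesis
    by (auto intro: has_field_derivative_at_within strict_mono_on_if_pos_derivative is_interval_ci)
qed

end
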